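(* Let $\Xi$ be an orthogonally invariant FQ operation (scalar, vectorial, or pseudoscalar) and let $\tilde p^{[s]}_{i_1,\dots,i_r}$ denote its coefficients in the circular basis, where $s\in\{0\}$ (scalar), $s\in\{1,2\}$ (the two components of a vectorial operation) or $s=12$ (pseudoscalar). Let $\iota=(i_1,\dots,i_r)$ with all $i_j\in\{4,5\}$, and put $d=\mathrm{Mult}^4_\iota-\mathrm{Mult}^5_\iota$, where $\mathrm{Mult}^x_\iota$ is the number of occurrences of $x$ in $\iota$. If $d\neq 0$, and moreover either $s\in\{0,12\}$ or $d\neq 1$, then $\tilde p^{[s]}_{i_1,\dots,i_r}=0$. (Thus the only coefficients of this kind not forced to vanish by orthogonal invariance are those with $d=0$, any $s$, and those with $d=1$, $s\in\{1,2\}$.)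
   Context: Setting. $(Q_1,Q_2)$ is a Clifford system: $Q_1^2=Q_2^2=-1$, $Q_1Q_2=-Q_2Q_1$. $R_1,R_2$ are formal noncommuting infinitesimal variables; one works in the real algebra generated by $Q_1,Q_2,R_1,R_2$ (free apart from the Clifford relations), completed with respect to total degree in $R_1,R_2$, or in extensions of it by further formal infinitesimal elements. Put $A_i=Q_i+R_i$. For $Q$ with $Q^2=-1$ and any $X$ put $X^0_Q=\frac12(X+Q^{-1}XQ)$, $X^1_Q=\frac12(X-Q^{-1}XQ)$. The split variables are $r_1,\dots,r_8$: for $j\in\{1,2\}$, $\iota_1,\iota_2\in\{0,1\}$, $r_{4(j-1)+2\iota_1+\iota_2+1}=((R_jQ_j^{-1})^{\iota_1}_{Q_1})^{\iota_2}_{Q_2}$ (so $r_k$ commutes with $Q_m$ if $\iota_m=0$ and anticommutes if $\iota_m=1$). An FQ operation around $(Q_1,Q_2)$ is given by formal real noncommutative power series in eight variables: scalar $\Xi(A_1,A_2)=f_0(r_1,\dots,r_8)$, vectorial $\Xi(A_1,A_2)=(f_1(r)Q_1,f_2(r)Q_2)$, pseudoscalar $\Xi(A_1,A_2)=f_{12}(r)Q_1Q_2$; the operation is identified with this family of series. The same series can be evaluated relative to any other Clifford system $(Q_1',Q_2')$ at $(A_1',A_2')$ with $A'_i-Q'_i$ infinitesimal, by forming the split variables of $A_i'-Q_i'$ relative to $(Q'_1,Q'_2)$ and multiplying by $Q'_s$. Mixed basis: $\hat r_1=\frac12(r_2-r_7)$, $\hat r_2=\frac12(r_2+r_7)$,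 $\hat r_3=\frac12(r_1+r_5)$, $\hat r_4=\frac12(r_1-r_5)$, $\hat r_5=\frac12(r_4-r_8)$, $\hat r_6=\frac12(r_4+r_8)$, $\hat r_7=\frac12(r_3+r_6)$, $\hat r_8=\frac12(r_3-r_6)$. Circular basis: $\tilde r_i=\hat r_i$ for $i\notin\{4,5\}$, $\tilde r_4=\hat r_4+\hat r_5$, $\tilde r_5=\hat r_4-\hat r_5$. Rewriting $f_s$ as a noncommutative power series in $\tilde r_1,\dots,\tilde r_8$, $\tilde p^{[s]}_{i_1,\dots,i_r}$ is the coefficient of $\tilde r_{i_1}\cdots\tilde r_{i_r}$. Orthogonal invariance: let $t$ be a central formal variable with $t^2=0$ and $\mathrm{Rot}_t(B_1,B_2)=(B_1+tB_2,\,B_2-tB_1)$ (then $\mathrm{Rot}_t(Q_1,Q_2)$ is again a Clifford system). A (pseudo)scalar $\Xi$ is orthogonally invariant if $\Xi_{(Q_1,Q_2)}(A_1,A_2)=\Xi_{\mathrm{Rot}_t(Q_1,Q_2)}(\mathrm{Rot}_t(A_1,A_2))$; a vectorial $\Xi$ is orthogonally invariant if $\mathrm{Rot}_t(\Xi_{(Q_1,Q_2)}(A_1,A_2))=\Xi_{\mathrm{Rot}_t(Q_1,Q_2)}(\mathrm{Rot}_t(A_1,A_2))$; here the subscript indicates the base Clifford system relative to which the series is evaluated. *)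

theory Defs
  imports Complex_Main
begin

text \<open>
  Model of the real algebra generated by a Clifford system (Q1,Q2) and formal
  infinitesimals, completed w.r.t. the degree in the infinitesimals, extended by a
  central t with t^2 = 0.  Every element is written uniquely as a (possibly infinite)
  sum  c(tau,w,a,b) * t^tau * g_w * Q1^a * Q2^b,  where w is a word in generators g_k
  (k a natural number; g_1..g_8 will be the split variables of the generic R1, R2),
  tau, a, b are booleans (exponent 0 or 1).  The generator g_k commutes with Q_m or
  anticommutes with Q_m according to the bits iota_m of k, exactly as the split variable
  r_k does.  Restricted to tau = False and letters 1..8 this is (isomorphic to) the
  completed algebra freely generated by Q1,Q2,R1,R2 modulo the Clifford relations.
\<close>

type_synonym fq_el = "bool \<Rightarrow> nat list \<Rightarrow> bool \<Rightarrow> bool \<Rightarrow> real"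

definition io1 :: "nat \<Rightarrow> nat" where "io1 k = ((k - 1) mod 4) div 2"
definition io2 :: "nat \<Rightarrow> nat" where "io2 k = (k - 1) mod 2"

definition bn :: "bool \<Rightarrow> nat" where "bn p = (if p then 1 else 0)"

text \<open>sign produced by moving Q1^a1 Q2^b1 to the right past the word v and then
  normalising Q1^a1 Q2^b1 Q1^a2 Q2^b2 using Q1^2 = Q2^2 = -1, Q1 Q2 = - Q2 Q1.\<close>
definition mul_sign :: "bool \<Rightarrow> bool \<Rightarrow> nat list \<Rightarrow> bool \<Rightarrow> bool \<Rightarrow> real" where
  "mul_sign a1 b1 v a2 b2 =
     (-1) ^ (bn a1 * sum_list (map io1 v) + bn b1 * sum_list (map io2 v)
             + bn b1 * bn a2 + bn a1 * bn a2 + bn b1 * bn b2)"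

definition mulc :: "fq_el \<Rightarrow> fq_el \<Rightarrow> bool \<Rightarrow> bool \<Rightarrow> nat list \<Rightarrow> bool \<Rightarrow> bool \<Rightarrow> real" where
  "mulc x y t1 t2 w a b =
     (\<Sum>k\<in>{0..length w}. \<Sum>a1\<in>(UNIV::bool set). \<Sum>b1\<in>(UNIV::bool set).
        x t1 (take k w) a1 b1 * y t2 (drop k w) (a \<noteq> a1) (b \<noteq> b1)
        * mul_sign a1 b1 (drop k w) (a \<noteq> a1) (b \<noteq> b1))"

definition fq_mul :: "fq_el \<Rightarrow> fq_el \<Rightarrow> fq_el" (infixl "\<star>" 70) where
  "fq_mul x y = (\<lambda>tau w a b. if tau then mulc x y False True w a b + mulc x y True False w a b
                              else mulc x y False False w a b)"

definition fq_add :: "fq_el \<Rightarrow> fq_el \<Rightarrow> fq_el" (infixl "\<oplus>" 65) where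
  "fq_add x y = (\<lambda>tau w a b. x tau w a b + y tau w a b)"

definition fq_smul :: "real \<Rightarrow> fq_el \<Rightarrow> fq_el" where
  "fq_smul c x = (\<lambda>tau w a b. c * x tau w a b)"

definition fq_sub :: "fq_el \<Rightarrow> fq_el \<Rightarrow> fq_el" (infixl "\<ominus>" 65) where
  "fq_sub x y = (\<lambda>tau w a b. x tau w a b - y tau w a b)"

definition fq_one :: fq_el where
  "fq_one = (\<lambda>tau w a b. if \<not> tau \<and> w = [] \<and> \<not> a \<and> \<not> b then 1 else 0)"

definition fq_t :: fq_el where
  "fq_t = (\<lambda>tau w a b. if tau \<and> w = [] \<and> \<not> a \<and> \<not> b then 1 else 0)"

definition fq_Q1 :: fq_el where
  "fq_Q1 = (\<lambda>tau w a b. if \<not> tau \<and> w = [] \<and> a \<and> \<not> b then 1 else 0)"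

definition fq_Q2 :: fq_el where
  "fq_Q2 = (\<lambda>tau w a b. if \<not> tau \<and> w = [] \<and> \<not> a \<and> b then 1 else 0)"

definition fq_gen :: "nat \<Rightarrow> fq_el" where
  "fq_gen k = (\<lambda>tau w a b. if \<not> tau \<and> w = [k] \<and> \<not> a \<and> \<not> b then 1 else 0)"

definition fq_R1 :: fq_el where
  "fq_R1 = (fq_gen 1 \<oplus> fq_gen 2 \<oplus> fq_gen 3 \<oplus> fq_gen 4) \<star> fq_Q1"
definition fq_R2 :: fq_el where
  "fq_R2 = (fq_gen 5 \<oplus> fq_gen 6 \<oplus> fq_gen 7 \<oplus> fq_gen 8) \<star> fq_Q2"

definition fq_A1 :: fq_el where "fq_A1 = fq_Q1 \<oplus> fq_R1"
definition fq_A2 :: fq_el where "fq_A2 = fq_Q2 \<oplus> fq_R2"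

text \<open>For Q with Q^2 = -1 the inverse is -Q.\<close>
definition cinv :: "fq_el \<Rightarrow> fq_el" where "cinv Q = fq_smul (-1) Q"

definition part0 :: "fq_el \<Rightarrow> fq_el \<Rightarrow> fq_el" where
  "part0 Q X = fq_smul (1/2) (X \<oplus> (cinv Q \<star> X \<star> Q))"
definition part1 :: "fq_el \<Rightarrow> fq_el \<Rightarrow> fq_el" where
  "part1 Q X = fq_smul (1/2) (X \<ominus> (cinv Q \<star> X \<star> Q))"

definition part :: "nat \<Rightarrow> fq_el \<Rightarrow> fq_el \<Rightarrow> fq_el" where
  "part i Q X = (if i = 0 then part0 Q X else part1 Q X)"

text \<open>split_var Q1 Q2 R1 R2 k = r_k, for k = 4(j-1) + 2 iota1 + iota2 + 1\<close>
definition split_var :: "fq_el \<Rightarrow> fq_el \<Rightarrow> fq_el \<Rightarrow> fq_el \<Rightarrow> nat \<Rightarrow> fq_el" where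
  "split_var Q1 Q2 R1 R2 k =
     (let j = (k - 1) div 4;
          X = (if j = 0 then R1 \<star> cinv Q1 else R2 \<star> cinv Q2)
      in part (io2 k) Q2 (part (io1 k) Q1 X))"

text \<open>A series is its coefficient function on words over the letters 1..8
  (values on other words are irrelevant).\<close>
type_synonym ncseries = "nat list \<Rightarrow> real"

definition words_upto :: "nat \<Rightarrow> nat list set" where
  "words_upto n = {u. set u \<subseteq> {1..8} \<and> length u \<le> n}"

definition fq_prod :: "fq_el list \<Rightarrow> fq_el" where
  "fq_prod xs = foldr fq_mul xs fq_one"

text \<open>Evaluation of a series at infinitesimal arguments x_1..x_8 (no component on the
  empty word): the coefficient at word w only receives contributions from words u with
  length u \<le> length w, so the infinite sum is coefficientwise finite.\<close>
definition ser_eval :: "ncseries \<Rightarrow> (nat \<Rightarrow> fq_el) \<Rightarrow> fq_el" where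
  "ser_eval f x = (\<lambda>tau w a b.
      \<Sum>u\<in>words_upto (length w). f u * fq_prod (map x u) tau w a b)"

definition ser_at :: "ncseries \<Rightarrow> fq_el \<Rightarrow> fq_el \<Rightarrow> fq_el \<Rightarrow> fq_el \<Rightarrow> fq_el" where
  "ser_at f Q1 Q2 A1 A2 = ser_eval f (split_var Q1 Q2 (A1 \<ominus> Q1) (A2 \<ominus> Q2))"

definition rot :: "fq_el \<times> fq_el \<Rightarrow> fq_el \<times> fq_el" where
  "rot B = (fst B \<oplus> (fq_t \<star> snd B), snd B \<ominus> (fq_t \<star> fst B))"

datatype fqop = Scalar ncseries | Vectorial ncseries ncseries | Pseudoscalar ncseries

definition orth_inv :: "fqop \<Rightarrow> bool" where
  "orth_inv Xi =
    (let Q = (fq_Q1, fq_Q2); A = (fq_A1, fq_A2);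
         Q' = rot Q; A' = rot A;
         ev = (\<lambda>f QQ AA. ser_at f (fst QQ) (snd QQ) (fst AA) (snd AA))
     in case Xi of
       Scalar f \<Rightarrow> ev f Q A = ev f Q' A'
     | Vectorial f1 f2 \<Rightarrow>
         rot (ev f1 Q A \<star> fst Q, ev f2 Q A \<star> snd Q) = (ev f1 Q' A' \<star> fst Q', ev f2 Q' A' \<star> snd Q')
     | Pseudoscalar f \<Rightarrow> ev f Q A \<star> (fst Q \<star> snd Q) = ev f Q' A' \<star> (fst Q' \<star> snd Q'))"

fun components :: "fqop \<Rightarrow> nat set" where
  "components (Scalar f) = {0}"
| "components (Vectorial f1 f2) = {1, 2}"
| "components (Pseudoscalar f) = {12}"

fun series :: "fqop \<Rightarrow> nat \<Rightarrow> ncseries" where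
  "series (Scalar f) s = f"
| "series (Vectorial f1 f2) s = (if s = 1 then f1 else f2)"
| "series (Pseudoscalar f) s = f"

text \<open>hatT j k: coefficient of r_k in \<hat>r_j (mixed basis)\<close>
definition hatT :: "nat \<Rightarrow> nat \<Rightarrow> real" where
  "hatT j k = (if j = 1 then (if k = 2 then 1/2 else if k = 7 then -1/2 else 0)
     else if j = 2 then (if k = 2 then 1/2 else if k = 7 then 1/2 else 0)
     else if j = 3 then (if k = 1 then 1/2 else if k = 5 then 1/2 else 0)
     else if j = 4 then (if k = 1 then 1/2 else if k = 5 then -1/2 else 0)
     else if j = 5 then (if k = 4 then 1/2 else if k = 8 then -1/2 else 0)
     else if j = 6 then (if k = 4 then 1/2 else if k = 8 then 1/2 else 0)
     else if j = 7 then (if k = 3 then 1/2 else if k = 6 then 1/2 else 0)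
     else if j = 8 then (if k = 3 then 1/2 else if k = 6 then -1/2 else 0)
     else 0)"

text \<open>circT j l: coefficient of \<hat>r_l in \<tilde>r_j\<close>
definition circT :: "nat \<Rightarrow> nat \<Rightarrow> real" where
  "circT j l = (if j = 4 then (if l = 4 then 1 else if l = 5 then 1 else 0)
     else if j = 5 then (if l = 4 then 1 else if l = 5 then -1 else 0)
     else if j = l \<and> j \<in> {1..8} then 1 else 0)"

text \<open>coefficient of r_k in \<tilde>r_j\<close>
definition circ_of_r :: "nat \<Rightarrow> nat \<Rightarrow> real" where
  "circ_of_r j k = (\<Sum>l\<in>{1..8}. circT j l * hatT l k)"

text \<open>r_of_circ k j: coefficient of \<tilde>r_j in r_k (inverse change of variables)\<close>
definition r_of_circ :: "nat \<Rightarrow> nat \<Rightarrow> real" where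
  "r_of_circ k j = (if k = 1 then (if j = 3 then 1 else if j = 4 then 1/2 else if j = 5 then 1/2 else 0)
     else if k = 2 then (if j = 1 then 1 else if j = 2 then 1 else 0)
     else if k = 3 then (if j = 7 then 1 else if j = 8 then 1 else 0)
     else if k = 4 then (if j = 4 then 1/2 else if j = 5 then -1/2 else if j = 6 then 1 else 0)
     else if k = 5 then (if j = 3 then 1 else if j = 4 then -1/2 else if j = 5 then -1/2 else 0)
     else if k = 6 then (if j = 7 then 1 else if j = 8 then -1 else 0)
     else if k = 7 then (if j = 1 then -1 else if j = 2 then 1 else 0)
     else if k = 8 then (if j = 4 then -1/2 else if j = 5 then 1/2 else if j = 6 then 1 else 0)
     else 0)"

lemma r_of_circ_inverse:
  assumes "j \<in> {1..8}" "l \<in> {1..8}"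
  shows "(\<Sum>k\<in>{1..8}. circ_of_r j k * r_of_circ k l) = (if j = l then 1 else 0)"
proof -
  have e: "{1..8::nat} = {1,2,3,4,5,6,7,8}" by auto
  from assms have "j \<in> {1,2,3,4,5,6,7,8}" "l \<in> {1,2,3,4,5,6,7,8}" by (simp_all only: e)
  then show ?thesis
    by (simp only: e circ_of_r_def) (auto simp: circT_def hatT_def r_of_circ_def)
qed

text \<open>Coefficient \<tilde>p_u of \<tilde>r_{u_1}...\<tilde>r_{u_r} after rewriting f in the circular basis:
  substituting r_k = \<Sum>_j r_of_circ k j \<tilde>r_j into \<Sum>_w f_w r_w.\<close>
definition ptilde :: "ncseries \<Rightarrow> nat list \<Rightarrow> real" where
  "ptilde f u = (\<Sum>w\<in>{w. set w \<subseteq> {1..8} \<and> length w = length u}.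
                   f w * (\<Prod>i<length u. r_of_circ (w ! i) (u ! i)))"

definition Mult_diff :: "nat list \<Rightarrow> int" where
  "Mult_diff u = int (count_list u 4) - int (count_list u 5)"

end

theory Submission
  imports Defs
begin

text \<open>
  Under the infinitesimal rotation the Clifford system becomes (Q1 + t Q2, Q2 - t Q1), and a direct
  computation shows that the split variables of the rotated arguments relative to it are
  r_k + t (\<Sum>c. rot_deriv k c * r_c) Q1 Q2. Hence a series evaluates to f(r) + t (D f)(r) Q1 Q2,
  where D is the derivation induced by rot_deriv. As Q1 Q2 is itself rotation invariant, orthogonal
  invariance says D f = 0 for scalar and pseudoscalar operations, and D f1 = f2 - f1, D f2 = f1 - f2
  for vectorial ones. The circular variables r~4 and r~5 commute with Q1 Q2 and are eigenvectors of
  the rotation with eigenvalues -2 and 2, so a monomial in them has eigenvalue -2 d. Comparing its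
  coefficients gives -2 d p = 0 in the first case, and in the second a linear system in p1, p2 whose
  only solution is zero unless d = 1.
\<close>

section \<open>Elements homogeneous in the generators\<close>

definition homogeneous :: "nat \<Rightarrow> fq_el \<Rightarrow> bool" where
  "homogeneous n x \<longleftrightarrow> (\<forall>tau w a b. length w \<noteq> n \<longrightarrow> x tau w a b = 0)"

lemma homogeneous_eqI:
  assumes "homogeneous n x" "homogeneous n y"
    and "\<And>tau w a b. length w = n \<Longrightarrow> x tau w a b = y tau w a b"
  shows "x = y"
  using assms unfolding homogeneous_def by (intro ext) metis

lemma mulc_homogeneous_left:
  assumes "homogeneous n x"
  shows "mulc x y t1 t2 w a b = (if n \<le> length w then \<Sum>a1\<in>UNIV. \<Sum>b1\<in>UNIV.
      x t1 (take n w) a1 b1 * y t2 (drop n w) (a \<noteq> a1) (b \<noteq> b1)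
      * mul_sign a1 b1 (drop n w) (a \<noteq> a1) (b \<noteq> b1) else 0)"
proof -
  have "x t1 (take k w) a1 b1 = 0" if "k \<in> {0..length w}" "k \<noteq> n" for k a1 b1
    using assms that by (simp add: homogeneous_def)
  then have "mulc x y t1 t2 w a b = (\<Sum>k\<in>{0..length w}. if k = n then \<Sum>a1\<in>UNIV. \<Sum>b1\<in>UNIV.
      x t1 (take k w) a1 b1 * y t2 (drop k w) (a \<noteq> a1) (b \<noteq> b1)
      * mul_sign a1 b1 (drop k w) (a \<noteq> a1) (b \<noteq> b1) else 0)"
    unfolding mulc_def by (intro sum.cong) auto
  then show ?thesis by simp
qed

lemma mulc_homogeneous_right:
  assumes "homogeneous n y"
  shows "mulc x y t1 t2 w a b = (if n \<le> length w then \<Sum>a1\<in>UNIV. \<Sum>b1\<in>UNIV.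
      x t1 (take (length w - n) w) a1 b1 * y t2 (drop (length w - n) w) (a \<noteq> a1) (b \<noteq> b1)
      * mul_sign a1 b1 (drop (length w - n) w) (a \<noteq> a1) (b \<noteq> b1) else 0)"
proof -
  have "y t2 (drop k w) a2 b2 = 0" if "k \<in> {0..length w}" "k \<noteq> length w - n \<or> \<not> n \<le> length w" for k a2 b2
    using assms that by (auto simp: homogeneous_def)
  then have "mulc x y t1 t2 w a b = (\<Sum>k\<in>{0..length w}. if k = length w - n \<and> n \<le> length w
      then \<Sum>a1\<in>UNIV. \<Sum>b1\<in>UNIV.
      x t1 (take k w) a1 b1 * y t2 (drop k w) (a \<noteq> a1) (b \<noteq> b1)
      * mul_sign a1 b1 (drop k w) (a \<noteq> a1) (b \<noteq> b1) else 0)"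
    unfolding mulc_def by (intro sum.cong) auto
  then show ?thesis by simp
qed

lemma homogeneous_mul:
  assumes "homogeneous m x" "homogeneous n y"
  shows "homogeneous (m + n) (x \<star> y)"
proof -
  have "mulc x y t1 t2 w a b = 0" if "length w \<noteq> m + n" for t1 t2 w a b
    using assms(2) that by (simp add: mulc_homogeneous_left[OF assms(1)] homogeneous_def)
  then show ?thesis by (simp add: homogeneous_def fq_mul_def)
qed

lemma homogeneous_mul_left0: "homogeneous 0 x \<Longrightarrow> homogeneous n y \<Longrightarrow> homogeneous n (x \<star> y)"
  and homogeneous_mul_right0: "homogeneous n x \<Longrightarrow> homogeneous 0 y \<Longrightarrow> homogeneous n (x \<star> y)"
  using homogeneous_mul[of 0 x n y] homogeneous_mul[of n x 0 y] by simp_all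

lemma homogeneous_add: "homogeneous n x \<Longrightarrow> homogeneous n y \<Longrightarrow> homogeneous n (x \<oplus> y)"
  and homogeneous_sub: "homogeneous n x \<Longrightarrow> homogeneous n y \<Longrightarrow> homogeneous n (x \<ominus> y)"
  and homogeneous_smul: "homogeneous n x \<Longrightarrow> homogeneous n (fq_smul r x)"
  by (simp_all add: homogeneous_def fq_add_def fq_sub_def fq_smul_def)

lemma homogeneous_cinv: "homogeneous n x \<Longrightarrow> homogeneous n (cinv x)"
  by (simp add: cinv_def homogeneous_smul)

lemma homogeneous_part:
  assumes "homogeneous 0 Q" "homogeneous n X"
  shows "homogeneous n (part i Q X)"
proof -
  have "homogeneous n (cinv Q \<star> X \<star> Q)"
    using assms by (intro homogeneous_mul_left0 homogeneous_mul_right0 homogeneous_cinv)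
  then show ?thesis
    using assms by (simp add: part_def part0_def part1_def homogeneous_add homogeneous_sub homogeneous_smul)
qed

lemma homogeneous_Q1_Q2_t: "homogeneous 0 fq_Q1" "homogeneous 0 fq_Q2" "homogeneous 0 fq_t"
  by (simp_all add: homogeneous_def fq_Q1_def fq_Q2_def fq_t_def)

lemma Q1_Q2_t_Nil:
  "fq_Q1 tau [] a b = (if \<not> tau \<and> a \<and> \<not> b then 1 else 0)"
  "fq_Q2 tau [] a b = (if \<not> tau \<and> \<not> a \<and> b then 1 else 0)"
  "fq_t tau [] a b = (if tau \<and> \<not> a \<and> \<not> b then 1 else 0)"
  by (simp_all add: fq_Q1_def fq_Q2_def fq_t_def)

lemma fq_mul_apply: "(x \<star> y) tau w a b =
    (if tau then mulc x y False True w a b + mulc x y True False w a b else mulc x y False False w a b)"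
  by (simp add: fq_mul_def)

lemma fq_mul_add_right: "z \<star> (x \<oplus> y) = (z \<star> x) \<oplus> (z \<star> y)"
  by (rule ext)+ (simp add: fq_mul_def mulc_def fq_add_def algebra_simps sum.distrib)

lemma cinv_apply: "cinv x tau w a b = - x tau w a b"
  by (simp add: cinv_def fq_smul_def)

lemma sum_UNIV_bool: "(\<Sum>x\<in>(UNIV::bool set). f x) = f False + f True"
  by (simp add: UNIV_bool)

lemma homogeneous1_eqI:
  assumes "homogeneous 1 x" "homogeneous 1 y" "\<And>tau c a b. x tau [c] a b = y tau [c] a b"
  shows "x = y"
proof (rule homogeneous_eqI[OF assms(1,2)])
  fix tau and w :: "nat list" and a b
  assume "length w = 1"
  then obtain c where "w = [c]" by (cases w) auto
  then show "x tau w a b = y tau w a b" using assms(3) by simp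
qed

text \<open>
  tq_el F D encodes F(g) + t D(g) Q1 Q2, with F and D giving the coefficients of the words in the
  generators; lin P T is its part of degree one, \<Sum>c. P c g_c + t (\<Sum>c. T c g_c) Q1 Q2.
\<close>

definition tq_el :: "(nat list \<Rightarrow> real) \<Rightarrow> (nat list \<Rightarrow> real) \<Rightarrow> fq_el" where
  "tq_el F D = (\<lambda>tau w a b.
     if \<not> tau \<and> \<not> a \<and> \<not> b then F w else if tau \<and> a \<and> b then D w else 0)"

definition lin :: "(nat \<Rightarrow> real) \<Rightarrow> (nat \<Rightarrow> real) \<Rightarrow> fq_el" where
  "lin P T = tq_el (\<lambda>w. case w of [c] \<Rightarrow> P c | _ \<Rightarrow> 0) (\<lambda>w. case w of [c] \<Rightarrow> T c | _ \<Rightarrow> 0)"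

lemma homogeneous_lin: "homogeneous 1 (lin P T)"
  by (auto simp: homogeneous_def lin_def tq_el_def split: list.split)

lemma lin_singleton:
  "lin P T tau [c] a b = (if \<not> tau \<and> \<not> a \<and> \<not> b then P c else if tau \<and> a \<and> b then T c else 0)"
  by (simp add: lin_def tq_el_def)

section \<open>The rotated Clifford system and its split variables\<close>

definition rotQ1 :: fq_el where "rotQ1 = fq_Q1 \<oplus> (fq_t \<star> fq_Q2)"
definition rotQ2 :: fq_el where "rotQ2 = fq_Q2 \<ominus> (fq_t \<star> fq_Q1)"

lemma rot_Q: "rot (fq_Q1, fq_Q2) = (rotQ1, rotQ2)"
  by (simp add: rot_def rotQ1_def rotQ2_def)

lemma homogeneous_rotQ: "homogeneous 0 rotQ1" "homogeneous 0 rotQ2"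
  unfolding rotQ1_def rotQ2_def
  by (intro homogeneous_add homogeneous_sub homogeneous_mul_left0 homogeneous_Q1_Q2_t)+

lemma rotQ1_Nil: "rotQ1 tau [] a b = (if tau then (if \<not> a \<and> b then 1 else 0) else if a \<and> \<not> b then 1 else 0)"
  and rotQ2_Nil: "rotQ2 tau [] a b = (if tau then (if a \<and> \<not> b then -1 else 0) else if \<not> a \<and> b then 1 else 0)"
  by (simp_all add: rotQ1_def rotQ2_def fq_add_def fq_sub_def fq_mul_def mulc_def sum_UNIV_bool
    fq_Q1_def fq_Q2_def fq_t_def mul_sign_def bn_def)

lemma io_cases: "io1 c = 0 \<or> io1 c = 1" "io2 c = 0 \<or> io2 c = 1"
  by (auto simp: io1_def io2_def)

lemmas coeff_eval_simps = fq_add_def fq_sub_def fq_smul_def fq_mul_def cinv_apply sum_UNIV_bool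
  mulc_homogeneous_left[where n = 0] mulc_homogeneous_right[where n = 0]
  homogeneous_Q1_Q2_t homogeneous_rotQ homogeneous_cinv Q1_Q2_t_Nil rotQ1_Nil rotQ2_Nil
  lin_singleton mul_sign_def bn_def

lemma part_rotQ1_lin:
  assumes "i \<le> 1"
  shows "part i rotQ1 (lin P T) = lin (\<lambda>c. if io1 c = i then P c else 0)
     (\<lambda>c. if io1 c = i then (if io2 c = i then 0 else - P c) else T c + (if io2 c = i then P c else 0))"
  apply (rule homogeneous1_eqI[OF homogeneous_part[OF homogeneous_rotQ(1) homogeneous_lin] homogeneous_lin])
  subgoal for tau c a b
    using io_cases[of c] assms
    by (simp add: part_def part0_def part1_def coeff_eval_simps homogeneous_lin) (auto simp: le_Suc_eq)
  done

lemma part_rotQ2_lin: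
  assumes "i \<le> 1"
  shows "part i rotQ2 (lin P T) = lin (\<lambda>c. if io2 c = i then P c else 0)
     (\<lambda>c. if io2 c = i then (if io1 c = i then 0 else - P c) else T c + (if io1 c = i then P c else 0))"
  apply (rule homogeneous1_eqI[OF homogeneous_part[OF homogeneous_rotQ(2) homogeneous_lin] homogeneous_lin])
  subgoal for tau c a b
    using io_cases[of c] assms
    by (simp add: part_def part0_def part1_def coeff_eval_simps homogeneous_lin) (auto simp: le_Suc_eq)
  done

lemma letter_cases:
  "(c::nat) \<notin> {1..8} \<or> c = 1 \<or> c = 2 \<or> c = 3 \<or> c = 4 \<or> c = 5 \<or> c = 6 \<or> c = 7 \<or> c = 8"
  by auto

lemma letterwise_ext:
  assumes "\<And>c::nat. c \<notin> {1..8} \<Longrightarrow> f c = g c"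
    and "f 1 = g 1" "f 2 = g 2" "f 3 = g 3" "f 4 = g 4" "f 5 = g 5" "f 6 = g 6" "f 7 = g 7" "f 8 = g 8"
  shows "f = g"
proof
  fix c show "f c = g c" using letter_cases[of c] assms by auto
qed

definition block1 :: "nat \<Rightarrow> real" where "block1 c = (if c \<in> {1..4} then 1 else 0)"
definition block2 :: "nat \<Rightarrow> real" where "block2 c = (if c \<in> {5..8} then 1 else 0)"

lemma homogeneous_gen: "homogeneous 1 (fq_gen k)"
  by (simp add: homogeneous_def fq_gen_def)

lemma fq_R1_eq_lin: "fq_R1 = lin block1 (\<lambda>_. 0) \<star> fq_Q1"
  and fq_R2_eq_lin: "fq_R2 = lin block2 (\<lambda>_. 0) \<star> fq_Q2"
proof -
  have "fq_gen 1 \<oplus> fq_gen 2 \<oplus> fq_gen 3 \<oplus> fq_gen 4 = lin block1 (\<lambda>_. 0)"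
    by (rule homogeneous1_eqI, intro homogeneous_add homogeneous_gen, rule homogeneous_lin)
      (auto simp: lin_singleton fq_add_def fq_gen_def block1_def)
  moreover have "fq_gen 5 \<oplus> fq_gen 6 \<oplus> fq_gen 7 \<oplus> fq_gen 8 = lin block2 (\<lambda>_. 0)"
    by (rule homogeneous1_eqI, intro homogeneous_add homogeneous_gen, rule homogeneous_lin)
      (auto simp: lin_singleton fq_add_def fq_gen_def block2_def)
  ultimately show "fq_R1 = lin block1 (\<lambda>_. 0) \<star> fq_Q1" "fq_R2 = lin block2 (\<lambda>_. 0) \<star> fq_Q2"
    by (simp_all add: fq_R1_def fq_R2_def)
qed

lemma rot_A_minus_Q:
  "fst (rot (fq_A1, fq_A2)) \<ominus> rotQ1 = fq_R1 \<oplus> (fq_t \<star> fq_R2)"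
  "snd (rot (fq_A1, fq_A2)) \<ominus> rotQ2 = fq_R2 \<ominus> (fq_t \<star> fq_R1)"
  unfolding rot_def rotQ1_def rotQ2_def fq_A1_def fq_A2_def fq_mul_add_right fst_conv snd_conv
  by (simp_all add: fq_add_def fq_sub_def)

lemma rot_R_mul_cinv_rotQ:
  "(fq_R1 \<oplus> (fq_t \<star> fq_R2)) \<star> cinv rotQ1 = lin block1 (\<lambda>c. block2 c - block1 c)"
  "(fq_R2 \<ominus> (fq_t \<star> fq_R1)) \<star> cinv rotQ2 = lin block2 (\<lambda>c. block1 c - block2 c)"
proof -
  have R: "homogeneous 1 fq_R1" "homogeneous 1 fq_R2"
    unfolding fq_R1_eq_lin fq_R2_eq_lin by (intro homogeneous_mul_right0 homogeneous_lin homogeneous_Q1_Q2_t)+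
  have h: "homogeneous 1 ((fq_R1 \<oplus> (fq_t \<star> fq_R2)) \<star> cinv rotQ1)"
    "homogeneous 1 ((fq_R2 \<ominus> (fq_t \<star> fq_R1)) \<star> cinv rotQ2)"
    using R by (blast intro: homogeneous_mul_right0 homogeneous_add homogeneous_sub homogeneous_mul_left0
        homogeneous_cinv homogeneous_rotQ homogeneous_Q1_Q2_t)+
  show "(fq_R1 \<oplus> (fq_t \<star> fq_R2)) \<star> cinv rotQ1 = lin block1 (\<lambda>c. block2 c - block1 c)"
    apply (rule homogeneous1_eqI[OF h(1) homogeneous_lin])
    subgoal for tau c a b by (cases tau; cases a; cases b) (simp_all add: fq_R1_eq_lin fq_R2_eq_lin coeff_eval_simps)
    done
  show "(fq_R2 \<ominus> (fq_t \<star> fq_R1)) \<star> cinv rotQ2 = lin block2 (\<lambda>c. block1 c - block2 c)"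
    apply (rule homogeneous1_eqI[OF h(2) homogeneous_lin])
    subgoal for tau c a b by (cases tau; cases a; cases b) (simp_all add: fq_R1_eq_lin fq_R2_eq_lin coeff_eval_simps)
    done
qed

text \<open>The rotated split variables are g_k + t (\<Sum>c. rot_deriv k c * g_c) Q1 Q2.\<close>

definition rot_deriv :: "nat \<Rightarrow> nat \<Rightarrow> real" where
  "rot_deriv k c = (if k = 1 then (if c = 4 then -1 else if c = 8 then 1 else 0)
     else if k = 2 then (if c = 2 then -1 else if c = 7 then 1 else 0)
     else if k = 3 then (if c = 3 then -1 else if c = 6 then 1 else 0)
     else if k = 4 then (if c = 1 then -1 else if c = 5 then 1 else 0)
     else if k = 5 then (if c = 8 then -1 else if c = 4 then 1 else 0)
     else if k = 6 then (if c = 6 then -1 else if c = 3 then 1 else 0)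
     else if k = 7 then (if c = 7 then -1 else if c = 2 then 1 else 0)
     else if k = 8 then (if c = 5 then -1 else if c = 1 then 1 else 0) else 0)"

lemma io_le: "io1 k \<le> 1" "io2 k \<le> 1"
  using io_cases[of k] by auto

lemma split_var_rotated:
  assumes "k \<in> {1..8}"
  shows "split_var rotQ1 rotQ2 (fq_R1 \<oplus> (fq_t \<star> fq_R2)) (fq_R2 \<ominus> (fq_t \<star> fq_R1)) k
       = lin (\<lambda>c. if c = k then 1 else 0) (rot_deriv k)"
proof -
  have "\<forall>k\<in>{1, 2, 3, 4, 5, 6, 7, 8}.
      split_var rotQ1 rotQ2 (fq_R1 \<oplus> (fq_t \<star> fq_R2)) (fq_R2 \<ominus> (fq_t \<star> fq_R1)) k
       = lin (\<lambda>c. if c = k then 1 else 0) (rot_deriv k)"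
    unfolding ball_simps
    by (intro conjI TrueI;
        simp add: split_var_def rot_R_mul_cinv_rotQ part_rotQ1_lin[OF io_le(1)] part_rotQ2_lin[OF io_le(2)];
        rule arg_cong2[where f = lin]; rule letterwise_ext; auto simp: block1_def block2_def rot_deriv_def io1_def io2_def)
  moreover have "{1..8} = {1, 2, 3, 4, 5, 6, 7, 8::nat}" by auto
  ultimately show ?thesis using assms by blast
qed

text \<open>Setting t = 0 is a homomorphism taking the rotated data back to the original ones.\<close>

definition at_t0 :: "fq_el \<Rightarrow> fq_el" where
  "at_t0 x = (\<lambda>tau w a b. if tau then 0 else x False w a b)"

lemma at_t0_mul: "at_t0 (x \<star> y) = at_t0 x \<star> at_t0 y"
  and at_t0_add: "at_t0 (x \<oplus> y) = at_t0 x \<oplus> at_t0 y"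
  and at_t0_sub: "at_t0 (x \<ominus> y) = at_t0 x \<ominus> at_t0 y"
  and at_t0_smul: "at_t0 (fq_smul r x) = fq_smul r (at_t0 x)"
  by (simp_all add: fun_eq_iff at_t0_def fq_mul_def mulc_def fq_add_def fq_sub_def fq_smul_def)

lemma at_t0_split_var:
  "at_t0 (split_var Q1 Q2 R1 R2 k) = split_var (at_t0 Q1) (at_t0 Q2) (at_t0 R1) (at_t0 R2) k"
  by (simp add: split_var_def Let_def part_def part0_def part1_def cinv_def
      at_t0_mul at_t0_add at_t0_sub at_t0_smul)

lemma at_t0_t_mul: "at_t0 (fq_t \<star> x) = (\<lambda>_ _ _ _. 0)"
  by (simp add: fun_eq_iff at_t0_def fq_mul_def mulc_def fq_t_def)

lemma at_t0_rot:
  "at_t0 rotQ1 = fq_Q1" "at_t0 rotQ2 = fq_Q2"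
  "at_t0 (fq_R1 \<oplus> (fq_t \<star> fq_R2)) = fq_R1" "at_t0 (fq_R2 \<ominus> (fq_t \<star> fq_R1)) = fq_R2"
  unfolding rotQ1_def rotQ2_def at_t0_add at_t0_sub at_t0_t_mul
  by (simp_all add: fun_eq_iff fq_add_def fq_sub_def at_t0_def fq_Q1_def fq_Q2_def fq_R1_def fq_R2_def fq_mul_def mulc_def fq_gen_def)

lemma at_t0_lin: "at_t0 (lin P T) = lin P (\<lambda>_. 0)"
  by (simp add: fun_eq_iff at_t0_def lin_def tq_el_def split: list.split)

lemma A_minus_Q: "fq_A1 \<ominus> fq_Q1 = fq_R1" "fq_A2 \<ominus> fq_Q2 = fq_R2"
  by (rule ext)+ (simp_all add: fq_A1_def fq_A2_def fq_add_def fq_sub_def)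

lemma split_var_unrotated:
  assumes "k \<in> {1..8}"
  shows "split_var fq_Q1 fq_Q2 fq_R1 fq_R2 k = lin (\<lambda>c. if c = k then 1 else 0) (\<lambda>_. 0)"
  using arg_cong[OF split_var_rotated[OF assms], of at_t0]
  by (simp add: at_t0_split_var at_t0_rot at_t0_lin)

section \<open>Evaluating series at the rotated split variables\<close>

text \<open>
  deriv_coeff C u w is the coefficient of t g_w Q1 Q2 in the product over k in u of
  g_k + t (\<Sum>c. C k c * g_c) Q1 Q2; the sign mul_sign True True w False False comes from moving
  Q1 Q2 to the right of g_w.
\<close>

fun deriv_coeff :: "(nat \<Rightarrow> nat \<Rightarrow> real) \<Rightarrow> nat list \<Rightarrow> nat list \<Rightarrow> real" where
  "deriv_coeff C [] w = 0"
| "deriv_coeff C (k # u) [] = 0"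
| "deriv_coeff C (k # u) (c # w) = (if c = k then deriv_coeff C u w else 0)
     + (if w = u then C k c * mul_sign True True w False False else 0)"

lemma deriv_coeff_zero: "deriv_coeff (\<lambda>_ _. 0) u w = 0"
proof (induction u arbitrary: w)
  case (Cons k u)
  then show ?case by (cases w) simp_all
qed simp

lemma deriv_coeff_length: "deriv_coeff C u w \<noteq> 0 \<Longrightarrow> length u = length w"
  by (induction C u w rule: deriv_coeff.induct) (auto split: if_splits)

lemma fq_prod_Cons: "fq_prod (x # xs) = x \<star> fq_prod xs"
  by (simp add: fq_prod_def)

lemma fq_prod_lin:
  "fq_prod (map (\<lambda>k. lin (\<lambda>c. if c = k then 1 else 0) (C k)) u)
     = tq_el (\<lambda>w. if w = u then 1 else 0) (deriv_coeff C u)"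
proof (induction u)
  case Nil
  show ?case by (simp add: fun_eq_iff fq_prod_def fq_one_def tq_el_def)
next
  case (Cons k u)
  have "(lin (\<lambda>c. if c = k then 1 else 0) (C k) \<star> tq_el (\<lambda>w. if w = u then 1 else 0) (deriv_coeff C u)) tau w a b
      = tq_el (\<lambda>w. if w = k # u then 1 else 0) (deriv_coeff C (k # u)) tau w a b" for tau w a b
    by (cases w; cases tau; cases a; cases b)
      (simp_all add: fq_mul_def mulc_homogeneous_left[OF homogeneous_lin] sum_UNIV_bool lin_singleton tq_el_def
        mul_sign_def bn_def)
  then show ?case by (simp add: fq_prod_Cons Cons.IH fun_eq_iff)
qed

definition lie_deriv :: "(nat \<Rightarrow> nat \<Rightarrow> real) \<Rightarrow> ncseries \<Rightarrow> ncseries" where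
  "lie_deriv C f w = (\<Sum>u\<in>words_upto (length w). f u * deriv_coeff C u w)"

lemma lie_deriv_zero: "lie_deriv (\<lambda>_ _. 0) f = (\<lambda>_. 0)"
  by (simp add: fun_eq_iff lie_deriv_def deriv_coeff_zero)

lemma finite_words_upto: "finite (words_upto n)"
  unfolding words_upto_def by (rule finite_lists_length_le) simp

lemma ser_eval_cong:
  assumes "\<And>k. k \<in> {1..8} \<Longrightarrow> x k = y k"
  shows "ser_eval f x = ser_eval f y"
  unfolding ser_eval_def
proof (intro ext sum.cong refl)
  fix tau and w u :: "nat list" and a b
  assume "u \<in> words_upto (length w)"
  then have "map x u = map y u" using assms by (auto simp: words_upto_def)
  then show "f u * fq_prod (map x u) tau w a b = f u * fq_prod (map y u) tau w a b" by (simp only:)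
qed

lemma ser_eval_lin:
  "ser_eval f (\<lambda>k. lin (\<lambda>c. if c = k then 1 else 0) (C k))
     = tq_el (\<lambda>w. if set w \<subseteq> {1..8} then f w else 0) (lie_deriv C f)"
proof (intro ext)
  fix tau w a b
  have delta: "(\<Sum>u\<in>words_upto (length w). f u * (if w = u then 1 else 0))
      = (if set w \<subseteq> {1..8} then f w else 0)"
  proof -
    have "(\<Sum>u\<in>words_upto (length w). f u * (if w = u then 1 else 0))
        = (\<Sum>u\<in>words_upto (length w). if w = u then f u else 0)"
      by (rule sum.cong) auto
    also have "\<dots> = (if set w \<subseteq> {1..8} then f w else 0)"
      by (simp add: finite_words_upto) (simp add: words_upto_def)
    finally show ?thesis .
  qed
  show "ser_eval f (\<lambda>k. lin (\<lambda>c. if c = k then 1 else 0) (C k)) tau w a b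
     = tq_el (\<lambda>w. if set w \<subseteq> {1..8} then f w else 0) (lie_deriv C f) tau w a b"
    by (cases tau; cases a; cases b) (simp_all add: ser_eval_def fq_prod_lin tq_el_def lie_deriv_def delta)
qed

lemma ser_at_unrotated:
  "ser_at f fq_Q1 fq_Q2 fq_A1 fq_A2 = tq_el (\<lambda>w. if set w \<subseteq> {1..8} then f w else 0) (\<lambda>_. 0)"
proof -
  have "ser_at f fq_Q1 fq_Q2 fq_A1 fq_A2
      = ser_eval f (\<lambda>k. lin (\<lambda>c. if c = k then 1 else 0) ((\<lambda>_ _. 0) k))"
    unfolding ser_at_def A_minus_Q by (rule ser_eval_cong) (simp add: split_var_unrotated)
  then show ?thesis
    by (simp add: ser_eval_lin lie_deriv_zero)
qed

lemma ser_at_rotated: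
  "ser_at f rotQ1 rotQ2 (fst (rot (fq_A1, fq_A2))) (snd (rot (fq_A1, fq_A2)))
     = tq_el (\<lambda>w. if set w \<subseteq> {1..8} then f w else 0) (lie_deriv rot_deriv f)"
  unfolding ser_at_def rot_A_minus_Q ser_eval_lin[symmetric]
  by (rule ser_eval_cong) (rule split_var_rotated)

section \<open>Orthogonal invariance as a condition on the derivation\<close>

lemma rotQ1_mul_rotQ2: "rotQ1 \<star> rotQ2 = fq_Q1 \<star> fq_Q2"
proof (rule homogeneous_eqI)
  show "homogeneous 0 (rotQ1 \<star> rotQ2)" "homogeneous 0 (fq_Q1 \<star> fq_Q2)"
    by (simp_all add: homogeneous_mul_left0 homogeneous_rotQ homogeneous_Q1_Q2_t)
  fix tau and w :: "nat list" and a b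
  assume "length w = 0"
  then show "(rotQ1 \<star> rotQ2) tau w a b = (fq_Q1 \<star> fq_Q2) tau w a b"
    by (cases tau; cases a; cases b) (simp_all add: fq_mul_def mulc_def sum_UNIV_bool rotQ1_Nil rotQ2_Nil
        Q1_Q2_t_Nil mul_sign_def bn_def)
qed

lemma fq_el_eq_apply: "x = y \<Longrightarrow> x tau w a b = y tau w a b"
  by simp

lemma orth_inv_Scalar_lie_deriv:
  assumes "orth_inv (Scalar f)"
  shows "lie_deriv rot_deriv f w = 0"
proof -
  have "tq_el (\<lambda>w. if set w \<subseteq> {1..8} then f w else 0) (\<lambda>_. 0)
      = tq_el (\<lambda>w. if set w \<subseteq> {1..8} then f w else 0) (lie_deriv rot_deriv f)"
    using assms by (simp add: orth_inv_def Let_def rot_Q ser_at_unrotated ser_at_rotated)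
  from fq_el_eq_apply[OF this, of True w True True]
  show ?thesis by (simp add: tq_el_def)
qed

lemma orth_inv_Pseudoscalar_lie_deriv:
  assumes "orth_inv (Pseudoscalar f)"
  shows "lie_deriv rot_deriv f w = 0"
proof -
  have "tq_el (\<lambda>w. if set w \<subseteq> {1..8} then f w else 0) (\<lambda>_. 0) \<star> (fq_Q1 \<star> fq_Q2)
      = tq_el (\<lambda>w. if set w \<subseteq> {1..8} then f w else 0) (lie_deriv rot_deriv f) \<star> (fq_Q1 \<star> fq_Q2)"
    using assms by (simp add: orth_inv_def Let_def rot_Q ser_at_unrotated ser_at_rotated rotQ1_mul_rotQ2)
  \<comment> \<open>the coefficient of t g_w, since Q1 Q2 Q1 Q2 = -1\<close>
  from fq_el_eq_apply[OF this, of True w False False]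
  show ?thesis
    by (simp add: fq_mul_apply mulc_homogeneous_right[where n = 0] homogeneous_mul_left0 homogeneous_Q1_Q2_t
        mulc_homogeneous_left[where n = 0] sum_UNIV_bool tq_el_def Q1_Q2_t_Nil mul_sign_def bn_def)
qed

lemma orth_inv_Vectorial_lie_deriv:
  assumes "orth_inv (Vectorial f1 f2)" "set w \<subseteq> {1..8}"
  shows "lie_deriv rot_deriv f1 w = f2 w - f1 w" "lie_deriv rot_deriv f2 w = f1 w - f2 w"
proof -
  let ?F = "\<lambda>f. tq_el (\<lambda>w. if set w \<subseteq> {1..8} then f w else 0) (\<lambda>_. 0)"
  let ?G = "\<lambda>f. tq_el (\<lambda>w. if set w \<subseteq> {1..8} then f w else 0) (lie_deriv rot_deriv f)"
  have "rot (?F f1 \<star> fq_Q1, ?F f2 \<star> fq_Q2) = (?G f1 \<star> rotQ1, ?G f2 \<star> rotQ2)"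
    using assms(1) by (simp add: orth_inv_def Let_def rot_Q ser_at_unrotated ser_at_rotated)
  then have "(?F f1 \<star> fq_Q1) \<oplus> (fq_t \<star> (?F f2 \<star> fq_Q2)) = ?G f1 \<star> rotQ1"
    "(?F f2 \<star> fq_Q2) \<ominus> (fq_t \<star> (?F f1 \<star> fq_Q1)) = ?G f2 \<star> rotQ2"
    by (simp_all add: rot_def)
  \<comment> \<open>the coefficients of t g_w Q2 and of t g_w Q1\<close>
  from fq_el_eq_apply[OF this(1), of True w False True] fq_el_eq_apply[OF this(2), of True w True False]
  show "lie_deriv rot_deriv f1 w = f2 w - f1 w" "lie_deriv rot_deriv f2 w = f1 w - f2 w"
    using assms(2)
    by (simp_all add: fq_add_def fq_sub_def fq_mul_def mulc_homogeneous_right[where n = 0]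
        mulc_homogeneous_left[where n = 0] homogeneous_Q1_Q2_t homogeneous_rotQ
        sum_UNIV_bool tq_el_def Q1_Q2_t_Nil rotQ1_Nil rotQ2_Nil mul_sign_def bn_def)
qed

section \<open>Circular monomials are eigenvectors of the rotation\<close>

definition letter_words :: "nat \<Rightarrow> nat list set" where
  "letter_words r = {w. set w \<subseteq> {1..8} \<and> length w = r}"

fun circ_coeff :: "nat list \<Rightarrow> nat list \<Rightarrow> real" where
  "circ_coeff (c # w) (j # \<iota>) = r_of_circ c j * circ_coeff w \<iota>"
| "circ_coeff _ _ = 1"

lemma finite_letter_words: "finite (letter_words r)"
  unfolding letter_words_def by (rule finite_lists_length_eq) simp

lemma letter_words_0: "letter_words 0 = {[]}"
  by (auto simp: letter_words_def)

lemma sum_letter_words_Suc: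
  "(\<Sum>w\<in>letter_words (Suc r). g w) = (\<Sum>c\<in>{1..8}. \<Sum>w\<in>letter_words r. g (c # w))"
proof -
  have e: "letter_words (Suc r) = (\<lambda>(w, c). c # w) ` (letter_words r \<times> {1..8})"
    unfolding letter_words_def by (rule lists_length_Suc_eq)
  have inj: "inj_on (\<lambda>(w, c). c # w) (letter_words r \<times> {1..8::nat})"
    by (auto simp: inj_on_def)
  have "(\<Sum>w\<in>letter_words (Suc r). g w) = (\<Sum>(w, c)\<in>letter_words r \<times> {1..8}. g (c # w))"
    unfolding e by (subst sum.reindex[OF inj]) (simp add: case_prod_beta)
  also have "\<dots> = (\<Sum>w\<in>letter_words r. \<Sum>c\<in>{1..8}. g (c # w))"
    by (rule sum.cartesian_product[symmetric])
  also have "\<dots> = (\<Sum>c\<in>{1..8}. \<Sum>w\<in>letter_words r. g (c # w))"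
    by (rule sum.swap)
  finally show ?thesis .
qed

lemma ptilde_eq_sum_circ_coeff:
  "ptilde f \<iota> = (\<Sum>w\<in>letter_words (length \<iota>). f w * circ_coeff w \<iota>)"
proof -
  have "(\<Prod>i<length \<iota>. r_of_circ (w ! i) (\<iota> ! i)) = circ_coeff w \<iota>" if "length w = length \<iota>" for w
    using that
  proof (induction \<iota> arbitrary: w)
    case (Cons j \<iota>)
    then obtain c w' where "w = c # w'" "length w' = length \<iota>" by (cases w) auto
    then show ?case using Cons.IH unfolding length_Cons prod.lessThan_Suc_shift by simp
  qed simp
  then show ?thesis
    unfolding ptilde_def letter_words_def by (intro sum.cong) auto
qed

lemma ptilde_cong:
  "(\<And>w. set w \<subseteq> {1..8} \<Longrightarrow> f w = g w) \<Longrightarrow> ptilde f \<iota> = ptilde g \<iota>"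
  by (simp add: ptilde_def)

lemma ptilde_diff: "ptilde (\<lambda>w. f w - g w) \<iota> = ptilde f \<iota> - ptilde g \<iota>"
  by (simp add: ptilde_def left_diff_distrib sum_subtractf)

lemma ptilde_zero: "ptilde (\<lambda>_. 0) \<iota> = 0"
  by (simp add: ptilde_def)

lemma mul_sign_Q1Q2_Cons:
  "mul_sign True True (c # w) False False = (-1) ^ (io1 c + io2 c) * mul_sign True True w False False"
  by (simp add: mul_sign_def bn_def power_add)

text \<open>r~4 and r~5 only involve r_1, r_4, r_5 and r_8, which commute with Q1 Q2.\<close>

lemma mul_sign_Q1Q2_circ_coeff:
  assumes "set \<iota> \<subseteq> {4, 5}" "length w = length \<iota>"
  shows "mul_sign True True w False False * circ_coeff w \<iota> = circ_coeff w \<iota>"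
  using assms
proof (induction \<iota> arbitrary: w)
  case Nil
  then show ?case by (simp add: mul_sign_def bn_def)
next
  case (Cons j \<iota>)
  then obtain c w' where w: "w = c # w'" "length w' = length \<iota>" by (cases w) auto
  have IH: "mul_sign True True w' False False * circ_coeff w' \<iota> = circ_coeff w' \<iota>"
    using Cons w by simp
  have "j = 4 \<or> j = 5" using Cons.prems by auto
  then have "(-1) ^ (io1 c + io2 c) * r_of_circ c j = r_of_circ c j"
    by (cases "c \<in> {1, 4, 5, 8}") (auto simp: io1_def io2_def r_of_circ_def)
  then have "(-1) ^ (io1 c + io2 c) * r_of_circ c j * (mul_sign True True w' False False * circ_coeff w' \<iota>)
      = r_of_circ c j * circ_coeff w' \<iota>"
    by (simp only: IH)
  then show ?case by (simp add: w mul_sign_Q1Q2_Cons mult_ac)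
qed

lemma rot_deriv_circ_eigen:
  assumes "k \<in> {1..8}" "j \<in> {4, 5}"
  shows "(\<Sum>c\<in>{1..8}. rot_deriv k c * r_of_circ c j) = (if j = 4 then -2 else 2) * r_of_circ k j"
proof -
  have e: "{1..8::nat} = {1, 2, 3, 4, 5, 6, 7, 8}" by auto
  from assms have "j = 4 \<or> j = 5" by auto
  with letter_cases[of k] assms(1) show ?thesis
    unfolding e by (elim disjE; simp add: rot_deriv_def r_of_circ_def)
qed

lemma Mult_diff_Cons: "Mult_diff (j # \<iota>) = Mult_diff \<iota> + (if j = 4 then 1 else if j = 5 then -1 else 0)"
  by (simp add: Mult_diff_def)

lemma sum_deriv_coeff_circ_coeff:
  assumes "set u \<subseteq> {1..8}" "length u = length \<iota>" "set \<iota> \<subseteq> {4, 5}"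
  shows "(\<Sum>w\<in>letter_words (length \<iota>). deriv_coeff rot_deriv u w * circ_coeff w \<iota>)
    = -2 * real_of_int (Mult_diff \<iota>) * circ_coeff u \<iota>"
  using assms
proof (induction \<iota> arbitrary: u)
  case Nil
  then show ?case by (simp add: letter_words_0 Mult_diff_def)
next
  case (Cons j \<iota>)
  then obtain k u' where u: "u = k # u'" "length u' = length \<iota>" by (cases u) auto
  have k: "k \<in> {1..8}" and u': "u' \<in> letter_words (length \<iota>)"
    using Cons.prems u by (auto simp: letter_words_def)
  have j: "j \<in> {4, 5}" and \<iota>: "set \<iota> \<subseteq> {4, 5}" using Cons.prems by auto
  let ?W = "letter_words (length \<iota>)"
  let ?S = "\<Sum>w\<in>?W. deriv_coeff rot_deriv u' w * circ_coeff w \<iota>"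
  have IH: "?S = -2 * real_of_int (Mult_diff \<iota>) * circ_coeff u' \<iota>"
    using Cons.IH[OF _ u(2) \<iota>] u' by (simp add: letter_words_def)
  have "(\<Sum>w\<in>?W. deriv_coeff rot_deriv (k # u') (c # w) * (r_of_circ c j * circ_coeff w \<iota>))
      = (if c = k then r_of_circ c j * ?S else 0)
        + rot_deriv k c * r_of_circ c j * (mul_sign True True u' False False * circ_coeff u' \<iota>)" for c
  proof -
    have "(\<Sum>w\<in>?W. deriv_coeff rot_deriv (k # u') (c # w) * (r_of_circ c j * circ_coeff w \<iota>))
        = (\<Sum>w\<in>?W. (if c = k then deriv_coeff rot_deriv u' w else 0) * (r_of_circ c j * circ_coeff w \<iota>))
          + (\<Sum>w\<in>?W. (if w = u' then rot_deriv k c * mul_sign True True w False False else 0)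
              * (r_of_circ c j * circ_coeff w \<iota>))"
      by (simp add: distrib_right sum.distrib)
    also have "(\<Sum>w\<in>?W. (if c = k then deriv_coeff rot_deriv u' w else 0) * (r_of_circ c j * circ_coeff w \<iota>))
        = (if c = k then r_of_circ c j * ?S else 0)"
      by (simp add: sum_distrib_left mult_ac)
    also have "(\<Sum>w\<in>?W. (if w = u' then rot_deriv k c * mul_sign True True w False False else 0)
          * (r_of_circ c j * circ_coeff w \<iota>))
        = rot_deriv k c * r_of_circ c j * (mul_sign True True u' False False * circ_coeff u' \<iota>)"
    proof -
      have "(\<Sum>w\<in>?W. (if w = u' then rot_deriv k c * mul_sign True True w False False else 0)
          * (r_of_circ c j * circ_coeff w \<iota>))
        = (\<Sum>w\<in>?W. if u' = w then rot_deriv k c * mul_sign True True u' False False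
            * (r_of_circ c j * circ_coeff u' \<iota>) else 0)"
        by (intro sum.cong) auto
      then show ?thesis using u' by (simp only: sum.delta' finite_letter_words if_True mult_ac)
    qed
    finally show ?thesis .
  qed
  then have "(\<Sum>w\<in>letter_words (length (j # \<iota>)). deriv_coeff rot_deriv u w * circ_coeff w (j # \<iota>))
     = (\<Sum>c\<in>{1..8}. (if c = k then r_of_circ c j * ?S else 0)
        + rot_deriv k c * r_of_circ c j * (mul_sign True True u' False False * circ_coeff u' \<iota>))"
    by (simp add: sum_letter_words_Suc u)
  also have "\<dots> = r_of_circ k j * ?S + (\<Sum>c\<in>{1..8}. rot_deriv k c * r_of_circ c j) * circ_coeff u' \<iota>"
    using k by (simp add: sum.distrib sum_distrib_right[symmetric]
        mul_sign_Q1Q2_circ_coeff[OF \<iota> u(2)])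
  also have "\<dots> = r_of_circ k j * (-2 * real_of_int (Mult_diff \<iota>) * circ_coeff u' \<iota>)
      + (if j = 4 then -2 else 2) * r_of_circ k j * circ_coeff u' \<iota>"
    by (simp only: IH rot_deriv_circ_eigen[OF k j])
  also have "\<dots> = -2 * real_of_int (Mult_diff (j # \<iota>)) * circ_coeff u (j # \<iota>)"
    using j by (auto simp: Mult_diff_Cons u algebra_simps)
  finally show ?case .
qed

lemma ptilde_lie_deriv_rot:
  assumes "set \<iota> \<subseteq> {4, 5}"
  shows "ptilde (lie_deriv rot_deriv f) \<iota> = -2 * real_of_int (Mult_diff \<iota>) * ptilde f \<iota>"
proof -
  let ?U = "words_upto (length \<iota>)"
  let ?W = "letter_words (length \<iota>)"
  let ?d = "-2 * real_of_int (Mult_diff \<iota>)"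
  have "ptilde (lie_deriv rot_deriv f) \<iota>
      = (\<Sum>w\<in>?W. \<Sum>u\<in>?U. f u * (deriv_coeff rot_deriv u w * circ_coeff w \<iota>))"
    unfolding ptilde_eq_sum_circ_coeff
    by (intro sum.cong refl) (auto simp: lie_deriv_def letter_words_def sum_distrib_right mult.assoc)
  also have "\<dots> = (\<Sum>u\<in>?U. f u * (\<Sum>w\<in>?W. deriv_coeff rot_deriv u w * circ_coeff w \<iota>))"
    by (subst sum.swap) (simp add: sum_distrib_left)
  also have "\<dots> = (\<Sum>u\<in>?U. if length u = length \<iota> then f u * (?d * circ_coeff u \<iota>) else 0)"
  proof (intro sum.cong refl)
    fix u assume "u \<in> ?U"
    then have "set u \<subseteq> {1..8}" by (simp add: words_upto_def)
    moreover have "deriv_coeff rot_deriv u w = 0" if "length u \<noteq> length \<iota>" "w \<in> ?W" for w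
      using that deriv_coeff_length by (force simp: letter_words_def)
    ultimately show "f u * (\<Sum>w\<in>?W. deriv_coeff rot_deriv u w * circ_coeff w \<iota>)
        = (if length u = length \<iota> then f u * (?d * circ_coeff u \<iota>) else 0)"
      using sum_deriv_coeff_circ_coeff[OF _ _ assms] by auto
  qed
  also have "\<dots> = (\<Sum>u\<in>{u \<in> ?U. length u = length \<iota>}. f u * (?d * circ_coeff u \<iota>))"
    by (rule sum.inter_filter[symmetric]) (rule finite_words_upto)
  also have "{u \<in> ?U. length u = length \<iota>} = ?W"
    by (auto simp: words_upto_def letter_words_def)
  finally show ?thesis
    by (simp add: ptilde_eq_sum_circ_coeff sum_distrib_left mult_ac)
qed

lemma eigen_pair_zero:
  fixes d p q :: real
  assumes "d \<noteq> 0" "d \<noteq> 1" "-2 * d * p = q - p" "-2 * d * q = p - q"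
  shows "p = 0 \<and> q = 0"
proof -
  have "-2 * d * (p + q) = 0" using assms(3,4) by (simp add: algebra_simps)
  then have "q = - p" using assms(1) by simp
  with assms(3) have "(d - 1) * p = 0" by (simp add: algebra_simps)
  with assms(2) \<open>q = - p\<close> show ?thesis by simp
qed

lemma ptilde_eq_0_of_lie_deriv_eq_0:
  assumes "\<And>w. lie_deriv rot_deriv f w = 0" "set \<iota> \<subseteq> {4, 5}" "Mult_diff \<iota> \<noteq> 0"
  shows "ptilde f \<iota> = 0"
proof -
  have "lie_deriv rot_deriv f = (\<lambda>_. 0)" using assms(1) by auto
  then show ?thesis using ptilde_lie_deriv_rot[OF assms(2), of f] assms(3) by (simp add: ptilde_zero)
qed

lemma ptilde_eq_0_of_orth_inv_Vectorial:
  assumes "orth_inv (Vectorial f1 f2)" "set \<iota> \<subseteq> {4, 5}" "Mult_diff \<iota> \<noteq> 0" "Mult_diff \<iota> \<noteq> 1"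
  shows "ptilde f1 \<iota> = 0 \<and> ptilde f2 \<iota> = 0"
proof (rule eigen_pair_zero)
  let ?d = "real_of_int (Mult_diff \<iota>)"
  show "?d \<noteq> 0" "?d \<noteq> 1" using assms(3,4) by simp_all
  have "ptilde (lie_deriv rot_deriv f1) \<iota> = ptilde (\<lambda>w. f2 w - f1 w) \<iota>"
    "ptilde (lie_deriv rot_deriv f2) \<iota> = ptilde (\<lambda>w. f1 w - f2 w) \<iota>"
    by (intro ptilde_cong orth_inv_Vectorial_lie_deriv[OF assms(1)]; assumption)+
  then show "-2 * ?d * ptilde f1 \<iota> = ptilde f2 \<iota> - ptilde f1 \<iota>"
    "-2 * ?d * ptilde f2 \<iota> = ptilde f1 \<iota> - ptilde f2 \<iota>"
    by (simp_all only: ptilde_lie_deriv_rot[OF assms(2)] ptilde_diff)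
qed

theorem mainTheorem1:
  fixes Xi :: fqop and s :: nat and \<iota> :: "nat list"
  assumes "orth_inv Xi"
    and "s \<in> components Xi"
    and "set \<iota> \<subseteq> {4, 5}"
    and "Mult_diff \<iota> \<noteq> 0"
    and "s \<in> {0, 12} \<or> Mult_diff \<iota> \<noteq> 1"
  shows "ptilde (series Xi s) \<iota> = 0"
proof (cases Xi)
  case (Scalar f)
  then show ?thesis
    using assms orth_inv_Scalar_lie_deriv ptilde_eq_0_of_lie_deriv_eq_0 by simp
next
  case (Pseudoscalar f)
  then show ?thesis
    using assms orth_inv_Pseudoscalar_lie_deriv ptilde_eq_0_of_lie_deriv_eq_0 by simp
next
  case (Vectorial f1 f2)
  then have "Mult_diff \<iota> \<noteq> 1" using assms(2,5) by auto
  then show ?thesis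
    using Vectorial assms ptilde_eq_0_of_orth_inv_Vectorial by simp
qed

end
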